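(* The function $q\mapsto (p(q)-c)\big(1-F(p(q)/q)\big)$ is strictly convex on $Q$.
   Context: Let $0<q_\ell<q_h<\infty$, $Q=[q_\ell,q_h]$, and let $c$ be a real number with $0<c<q_\ell$. Let $F$ be a probability distribution on $[0,1]$ with support $[0,1]$ admitting a twice continuously differentiable density $f:(0,1)\to\mathbb{R}_{>0}$. Define $r(v)=(1-F(v))/f(v)$ and $\psi(v)=v-r(v)$ on $(0,1)$, and assume $\psi'(v)>0$ whenever $\psi(v)>0$. For $q\in Q$, $p(q)$ is the unique maximizer over $p\in\mathbb{R}$ of $(p-c)\big(1-F(p/q)\big)$. *)

theory Defs
  imports "HOL-Analysis.Analysis"
begin

definition strict_convex_on :: "real set \<Rightarrow> (real \<Rightarrow> real) \<Rightarrow> bool" where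
  "strict_convex_on S g \<longleftrightarrow>
     (\<forall>x\<in>S. \<forall>y\<in>S. x \<noteq> y \<longrightarrow> (\<forall>t::real. 0 < t \<and> t < 1 \<longrightarrow>
        g ((1 - t) * x + t * y) < (1 - t) * g x + t * g y))"

definition cdf_with_density :: "(real \<Rightarrow> real) \<Rightarrow> (real \<Rightarrow> real) \<Rightarrow> bool" where
  "cdf_with_density F f \<longleftrightarrow>
     (\<forall>x. x \<le> 0 \<longrightarrow> F x = 0) \<and> (\<forall>x. 1 \<le> x \<longrightarrow> F x = 1) \<and>
     continuous_on UNIV F \<and>
     (\<forall>x\<in>{0<..<1}. (F has_real_derivative f x) (at x)) \<and>
     (\<forall>x\<in>{0<..<1}. 0 < f x) \<and>
     (\<exists>f' f''. (\<forall>x\<in>{0<..<1}. (f has_real_derivative f' x) (at x) \<and>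
                                (f' has_real_derivative f'' x) (at x)) \<and>
               continuous_on {0<..<1} f'')"

definition hazard_inv :: "(real \<Rightarrow> real) \<Rightarrow> (real \<Rightarrow> real) \<Rightarrow> real \<Rightarrow> real" where
  "hazard_inv F f v = (1 - F v) / f v"

definition virt_val :: "(real \<Rightarrow> real) \<Rightarrow> (real \<Rightarrow> real) \<Rightarrow> real \<Rightarrow> real" where
  "virt_val F f v = v - hazard_inv F f v"

definition profit :: "(real \<Rightarrow> real) \<Rightarrow> real \<Rightarrow> real \<Rightarrow> real \<Rightarrow> real" where
  "profit F c q p = (p - c) * (1 - F (p / q))"

end

theory Submission
  imports Defs
begin

text \<open>Write a price as \<open>p = q * w\<close>, where \<open>w\<close> is the cutoff value of the buyers who purchase.
  Then the profit \<open>(q * w - c) * (1 - F w)\<close> is affine in \<open>q\<close> for every fixed \<open>w\<close>, so the maximal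
  profit is a pointwise maximum of affine functions of \<open>q\<close> and hence convex. Convexity is strict
  because a cutoff \<open>w\<close> that is optimal for two distinct qualities would satisfy both first-order
  conditions \<open>q * (1 - F w) = (q * w - c) * f w\<close>, forcing \<open>c * f w = 0\<close>.\<close>

lemma strict_convex_on_max_of_affine:
  fixes a b :: "'a \<Rightarrow> real" and V :: "real \<Rightarrow> real"
  assumes "convex S"
    and below: "\<And>q w. q \<in> S \<Longrightarrow> a w * q + b w \<le> V q"
    and attained: "\<And>q. q \<in> S \<Longrightarrow> \<exists>w. V q = a w * q + b w"
    and touches_once: "\<And>x y w. x \<in> S \<Longrightarrow> y \<in> S \<Longrightarrow>
      V x = a w * x + b w \<Longrightarrow> V y = a w * y + b w \<Longrightarrow> x = y"
  shows "strict_convex_on S V"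
  unfolding strict_convex_on_def
proof (intro ballI impI allI, elim conjE)
  fix x y t :: real
  assume x: "x \<in> S" and y: "y \<in> S" and "x \<noteq> y" and "0 < t" "t < 1"
  have "(1 - t) * x + t * y \<in> S"
    using convexD[OF \<open>convex S\<close> x y, of "1 - t" t] \<open>0 < t\<close> \<open>t < 1\<close> by simp
  then obtain w where w: "V ((1 - t) * x + t * y) = a w * ((1 - t) * x + t * y) + b w"
    using attained by blast
  have "a w * x + b w \<le> V x" "a w * y + b w \<le> V y"
    using below x y by auto
  moreover have "V x \<noteq> a w * x + b w \<or> V y \<noteq> a w * y + b w"
    using touches_once[OF x y] \<open>x \<noteq> y\<close> by blast
  ultimately have "(1 - t) * (a w * x + b w) + t * (a w * y + b w) < (1 - t) * V x + t * V y"
    using \<open>0 < t\<close> \<open>t < 1\<close>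
    by (smt (verit) mult_strict_left_mono mult_left_mono)
  then show "V ((1 - t) * x + t * y) < (1 - t) * V x + t * V y"
    using w by (simp add: algebra_simps)
qed

lemma cdf_with_density_less_one:
  assumes "cdf_with_density F f" "0 < w" "w < 1"
  shows "F w < 1"
proof -
  have F_cont_UNIV: "continuous_on UNIV F" and F_deriv: "\<forall>x\<in>{0<..<1}. (F has_real_derivative f x) (at x)"
    and f_pos: "\<forall>x\<in>{0<..<1}. 0 < f x" and "F 1 = 1"
    using assms(1) unfolding cdf_with_density_def by auto
  have F_cont: "continuous_on {w..1} F"
    using F_cont_UNIV by (rule continuous_on_subset) simp
  have "F differentiable (at x)" if "w < x" "x < 1" for x
    using F_deriv that assms(2) unfolding real_differentiable_def by auto
  then obtain l z where z: "w < z" "z < 1" "(F has_real_derivative l) (at z)" "F 1 - F w = (1 - w) * l"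
    using MVT[OF assms(3) F_cont] by blast
  have "z \<in> {0<..<1}"
    using z(1,2) assms(2) by simp
  then have "l = f z" and "f z > 0"
    using F_deriv f_pos z(3) DERIV_unique by blast+
  with z(4) assms(3) have "F 1 - F w > 0"
    by simp
  with \<open>F 1 = 1\<close> show ?thesis by simp
qed

lemma profit_at_scaled_price:
  "q \<noteq> 0 \<Longrightarrow> profit F c q (q * w) = (q * w - c) * (1 - F w)"
  unfolding profit_def by simp

lemma optimal_cutoff_first_order:
  assumes F: "cdf_with_density F f" and "0 < c" "c < q"
    and max: "\<And>w. (q * w - c) * (1 - F w) \<le> (q * v - c) * (1 - F v)"
  shows "0 < v" "v < 1" "q * (1 - F v) = (q * v - c) * f v"
proof -
  have F0: "\<And>x. x \<le> 0 \<Longrightarrow> F x = 0" and F1: "\<And>x. 1 \<le> x \<Longrightarrow> F x = 1"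
    and F_deriv: "\<forall>x\<in>{0<..<1}. (F has_real_derivative f x) (at x)"
    using F unfolding cdf_with_density_def by auto
  txt \<open>Any cutoff in \<open>(c / q, 1)\<close> earns positive profit, which rules out the boundary.\<close>
  have "0 < c / q" "c / q < 1"
    using \<open>0 < c\<close> \<open>c < q\<close> by auto
  then obtain w where "c / q < w" "0 < w" "w < 1"
    using dense by (meson less_trans)
  then have "q * w - c > 0" "1 - F w > 0"
    using \<open>0 < c\<close> \<open>c < q\<close> cdf_with_density_less_one[OF F] by (auto simp: field_simps)
  then have pos: "(q * v - c) * (1 - F v) > 0"
    using max[of w] by (smt (verit) mult_pos_pos)
  show "0 < v"
  proof (rule ccontr)
    assume "\<not> 0 < v"
    then have "F v = 0" "q * v \<le> 0"
      using F0 \<open>0 < c\<close> \<open>c < q\<close> by (auto simp: mult_nonneg_nonpos)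
    with pos \<open>0 < c\<close> show False by simp
  qed
  show "v < 1"
    using pos F1[of v] by (cases "1 \<le> v") auto
  have "((\<lambda>w. (q * w - c) * (1 - F w)) has_real_derivative q * (1 - F v) - (q * v - c) * f v) (at v)"
    using F_deriv \<open>0 < v\<close> \<open>v < 1\<close> by (auto intro!: derivative_eq_intros simp: algebra_simps)
  then have "q * (1 - F v) - (q * v - c) * f v = 0"
    by (rule DERIV_local_max[of _ _ _ 1]) (use max in auto)
  then show "q * (1 - F v) = (q * v - c) * f v" by simp
qed

lemma optimal_cutoff_determines_quality:
  assumes F: "cdf_with_density F f" and "0 < c" "c < x" "c < y"
    and max_x: "\<And>w. (x * w - c) * (1 - F w) \<le> (x * v - c) * (1 - F v)"
    and max_y: "\<And>w. (y * w - c) * (1 - F w) \<le> (y * v - c) * (1 - F v)"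
  shows "x = y"
proof (rule ccontr)
  assume "x \<noteq> y"
  note foc_x = optimal_cutoff_first_order[OF F \<open>0 < c\<close> \<open>c < x\<close> max_x]
  note foc_y = optimal_cutoff_first_order[OF F \<open>0 < c\<close> \<open>c < y\<close> max_y]
  have "(x - y) * (1 - F v - v * f v) = 0"
    using foc_x(3) foc_y(3) by (simp add: algebra_simps)
  with \<open>x \<noteq> y\<close> have "1 - F v = v * f v" by simp
  with foc_x(3) have "c * f v = 0" by (simp add: algebra_simps)
  moreover have "f v > 0"
    using F foc_x(1,2) unfolding cdf_with_density_def by auto
  ultimately show False using \<open>0 < c\<close> by simp
qed

theorem lemma2:
  fixes F f :: "real \<Rightarrow> real" and c ql qh :: real and p :: "real \<Rightarrow> real"
  assumes "0 < ql" and "ql < qh" and "0 < c" and "c < ql"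
    and "cdf_with_density F f"
    and "\<forall>v\<in>{0<..<1}. virt_val F f v > 0 \<longrightarrow> deriv (virt_val F f) v > 0"
    and "\<forall>q\<in>{ql..qh}. \<forall>p'. p' \<noteq> p q \<longrightarrow> profit F c q p' < profit F c q (p q)"
  shows "strict_convex_on {ql..qh} (\<lambda>q. (p q - c) * (1 - F (p q / q)))"
proof (rule strict_convex_on_max_of_affine[where a = "\<lambda>w. w * (1 - F w)" and b = "\<lambda>w. - c * (1 - F w)"])
  have affine: "w * (1 - F w) * q + - c * (1 - F w) = (q * w - c) * (1 - F w)" for q w
    by (simp add: algebra_simps)
  have optimal: "(q * w - c) * (1 - F w) \<le> (p q - c) * (1 - F (p q / q))" if "q \<in> {ql..qh}" for q w
  proof -
    have "profit F c q (q * w) \<le> profit F c q (p q)"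
      using assms(7) that by (cases "q * w = p q") (auto intro: less_imp_le)
    then show ?thesis
      using that assms(1) by (simp add: profit_at_scaled_price profit_def)
  qed
  show "convex {ql..qh}" by simp
  show "w * (1 - F w) * q + - c * (1 - F w) \<le> (p q - c) * (1 - F (p q / q))" if "q \<in> {ql..qh}" for q w
    using optimal[OF that] affine by simp
  show "\<exists>w. (p q - c) * (1 - F (p q / q)) = w * (1 - F w) * q + - c * (1 - F w)"
    if "q \<in> {ql..qh}" for q
  proof
    have "q \<noteq> 0" using that assms(1) by simp
    then show "(p q - c) * (1 - F (p q / q)) = p q / q * (1 - F (p q / q)) * q + - c * (1 - F (p q / q))"
      by (simp add: algebra_simps)
  qed
  show "x = y"
    if x: "x \<in> {ql..qh}" and y: "y \<in> {ql..qh}"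
      and touch_x: "(p x - c) * (1 - F (p x / x)) = w * (1 - F w) * x + - c * (1 - F w)"
      and touch_y: "(p y - c) * (1 - F (p y / y)) = w * (1 - F w) * y + - c * (1 - F w)" for x y w
  proof (rule optimal_cutoff_determines_quality[OF assms(5) assms(3)])
    show "c < x" "c < y" using x y assms(4) by auto
    show "(x * u - c) * (1 - F u) \<le> (x * w - c) * (1 - F w)" for u
      using optimal[OF x, of u] touch_x affine by simp
    show "(y * u - c) * (1 - F u) \<le> (y * w - c) * (1 - F w)" for u
      using optimal[OF y, of u] touch_y affine by simp
  qed
qed

end
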